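(* There exists a (weighted) instance of the atomic two-stage facility location game that admits no subgame perfect equilibrium.
   Context: Atomic two-stage facility location game. An instance is a triple $(H,U,k)$: $H=(V,E,w)$ is a finite directed graph with vertex weights $w:V\to\mathbb{Q}_{>0}$; $F$ is a set of $k$ facility agents; $U:F\to 2^V$ assigns to each facility agent $f$ a set $U(f)\subseteq V$ of feasible locations. The vertices are simultaneously the clients and the possible locations. A facility placement profile (FPP) is a vector $\mathbf{s}=(s_f)_{f\in F}$ with $s_f\in U(f)$ (several facilities may choose the same vertex); $S$ denotes the set of all FPPs. For a client $v$ let $N(v)=\{v\}\cup\{u:(v,u)\in E\}$ and $N_{\mathbf{s}}(v)=\{f\in F: s_f\in N(v)\}$. A client profile for $\mathbf{s}$ is $\sigma(\mathbf{s})$, assigning to each client $v$ numbers $\sigma(\mathbf{s})_{v,f}\in[0,1]$ ($f\in F$) with $\sigma(\mathbf{s})_{v,f}=0$ for $f\notin N_{\mathbf{s}}(v)$ and $\sum_{f\in N_{\mathbf{s}}(v)}\sigma(\mathbf{s})_{v,f}=1$ whenever $N_{\mathbf{s}}(v)\neq\varnothing$. A full client profile $\sigma$ specifies a client profile $\sigma(\mathbf{s}')$ for every $\mathbf{s}'\in S$. The load of facility $f$ is $\ell_f(\mathbf{s},\sigma)=\sum_{v\in V}\sigma(\mathbf{s})_{v,f}w(v)$. The cost of client $v$ is $L_v(\mathbf{s},\sigma)=w(v)+\sum_{f\in N_{\mathbf{s}}(v)}\sigma(\mathbf{s})_{v,f}\,\ell_{-v,f}(\mathbf{s},\sigma)$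 where $\ell_{-v,f}(\mathbf{s},\sigma)=\sum_{u\neq v}\sigma(\mathbf{s})_{u,f}w(u)$. $\sigma(\mathbf{s})$ is a client equilibrium if no client $v$ can strictly decrease $L_v$ by unilaterally changing her own distribution to another feasible one; $\sigma$ is a full client equilibrium if $\sigma(\mathbf{s}')$ is a client equilibrium for every $\mathbf{s}'\in S$. A pair $(\mathbf{s},\sigma)$ is a subgame perfect equilibrium (SPE) if $\sigma$ is a full client equilibrium and there is no facility $f$ and location $s'_f\in U(f)$ with $\ell_f((s'_f,\mathbf{s}_{-f}),\sigma)>\ell_f(\mathbf{s},\sigma)$. *)

theory Defs
  imports Complex_Main "HOL-Library.FuncSet"
begin

(* Vertices (clients = locations) and facility agents are both encoded as natural numbers.
   An instance: V finite vertex set, E \<subseteq> V \<times> V directed edges, w vertex weights (rational),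
   F finite set of facility agents (k = card F), U f \<subseteq> V feasible locations of f. *)

definition fl_instance ::
  "nat set \<Rightarrow> (nat \<times> nat) set \<Rightarrow> (nat \<Rightarrow> rat) \<Rightarrow> nat set \<Rightarrow> (nat \<Rightarrow> nat set) \<Rightarrow> bool" where
  "fl_instance V E w F U \<longleftrightarrow> finite V \<and> E \<subseteq> V \<times> V \<and> (\<forall>v\<in>V. w v > 0) \<and>
     finite F \<and> (\<forall>f\<in>F. U f \<subseteq> V \<and> U f \<noteq> {})"

definition FPPs :: "nat set \<Rightarrow> (nat \<Rightarrow> nat set) \<Rightarrow> (nat \<Rightarrow> nat) set" where
  "FPPs F U = (\<Pi>\<^sub>E f\<in>F. U f)"

definition nbh :: "(nat \<times> nat) set \<Rightarrow> nat \<Rightarrow> nat set" where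
  "nbh E v = {v} \<union> {u. (v, u) \<in> E}"

definition nbh_s :: "(nat \<times> nat) set \<Rightarrow> nat set \<Rightarrow> (nat \<Rightarrow> nat) \<Rightarrow> nat \<Rightarrow> nat set" where
  "nbh_s E F s v = {f\<in>F. s f \<in> nbh E v}"

definition feasible_dist ::
  "(nat \<times> nat) set \<Rightarrow> nat set \<Rightarrow> (nat \<Rightarrow> nat) \<Rightarrow> nat \<Rightarrow> (nat \<Rightarrow> real) \<Rightarrow> bool" where
  "feasible_dist E F s v d \<longleftrightarrow>
     (\<forall>f\<in>F. 0 \<le> d f \<and> d f \<le> 1) \<and>
     (\<forall>f\<in>F. f \<notin> nbh_s E F s v \<longrightarrow> d f = 0) \<and>
     (nbh_s E F s v \<noteq> {} \<longrightarrow> (\<Sum>f\<in>nbh_s E F s v. d f) = 1)"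

definition client_profile ::
  "nat set \<Rightarrow> (nat \<times> nat) set \<Rightarrow> nat set \<Rightarrow> (nat \<Rightarrow> nat) \<Rightarrow> (nat \<Rightarrow> nat \<Rightarrow> real) \<Rightarrow> bool" where
  "client_profile V E F s p \<longleftrightarrow> (\<forall>v\<in>V. feasible_dist E F s v (p v))"

definition load :: "nat set \<Rightarrow> (nat \<Rightarrow> rat) \<Rightarrow> (nat \<Rightarrow> nat \<Rightarrow> real) \<Rightarrow> nat \<Rightarrow> real" where
  "load V w p f = (\<Sum>v\<in>V. p v f * of_rat (w v))"

definition load_minus ::
  "nat set \<Rightarrow> (nat \<Rightarrow> rat) \<Rightarrow> (nat \<Rightarrow> nat \<Rightarrow> real) \<Rightarrow> nat \<Rightarrow> nat \<Rightarrow> real" where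
  "load_minus V w p v f = (\<Sum>u\<in>V - {v}. p u f * of_rat (w u))"

definition client_cost ::
  "nat set \<Rightarrow> (nat \<times> nat) set \<Rightarrow> (nat \<Rightarrow> rat) \<Rightarrow> nat set \<Rightarrow> (nat \<Rightarrow> nat)
     \<Rightarrow> (nat \<Rightarrow> nat \<Rightarrow> real) \<Rightarrow> nat \<Rightarrow> real" where
  "client_cost V E w F s p v =
     of_rat (w v) + (\<Sum>f\<in>nbh_s E F s v. p v f * load_minus V w p v f)"

definition client_equilibrium ::
  "nat set \<Rightarrow> (nat \<times> nat) set \<Rightarrow> (nat \<Rightarrow> rat) \<Rightarrow> nat set \<Rightarrow> (nat \<Rightarrow> nat)
     \<Rightarrow> (nat \<Rightarrow> nat \<Rightarrow> real) \<Rightarrow> bool" where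
  "client_equilibrium V E w F s p \<longleftrightarrow> client_profile V E F s p \<and>
     (\<forall>v\<in>V. \<forall>d. feasible_dist E F s v d \<longrightarrow>
        client_cost V E w F s p v \<le> client_cost V E w F s (p(v := d)) v)"

definition full_client_equilibrium ::
  "nat set \<Rightarrow> (nat \<times> nat) set \<Rightarrow> (nat \<Rightarrow> rat) \<Rightarrow> nat set \<Rightarrow> (nat \<Rightarrow> nat set)
     \<Rightarrow> ((nat \<Rightarrow> nat) \<Rightarrow> nat \<Rightarrow> nat \<Rightarrow> real) \<Rightarrow> bool" where
  "full_client_equilibrium V E w F U \<sigma> \<longleftrightarrow>
     (\<forall>s\<in>FPPs F U. client_equilibrium V E w F s (\<sigma> s))"

definition is_SPE ::
  "nat set \<Rightarrow> (nat \<times> nat) set \<Rightarrow> (nat \<Rightarrow> rat) \<Rightarrow> nat set \<Rightarrow> (nat \<Rightarrow> nat set)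
     \<Rightarrow> (nat \<Rightarrow> nat) \<Rightarrow> ((nat \<Rightarrow> nat) \<Rightarrow> nat \<Rightarrow> nat \<Rightarrow> real) \<Rightarrow> bool" where
  "is_SPE V E w F U s \<sigma> \<longleftrightarrow> s \<in> FPPs F U \<and> full_client_equilibrium V E w F U \<sigma> \<and>
     (\<forall>f\<in>F. \<forall>x\<in>U f. load V w (\<sigma> (s(f := x))) f \<le> load V w (\<sigma> s) f)"

end

(* Four clients 0, 1, 2, 3 with weights 4, 5, 1, 2 and arcs 1 -> 2, 1 -> 3. Facility 0 may open
   at 0 or 2, facility 1 at 1 or 3, so only client 1 can ever see both facilities; it joins the
   one with the smaller residual load, and its client equilibrium choice is forced. The resulting
   loads (facility 0, facility 1) of the four placements form a better-response cycle:
   (0,1): (4,5)  -> facility 1 moves to 3 -> (0,3): (4,7) -> facility 0 moves to 2 ->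
   (2,3): (6,2)  -> facility 1 moves to 1 -> (2,1): (1,5) -> facility 0 moves to 0 -> (0,1).
   Hence no placement is stable. *)

theory Submission
  imports Defs
begin

lemma client_equilibrium_unreachable:
  assumes "client_equilibrium V E w F s p" "v \<in> V" "f \<in> F" "f \<notin> nbh_s E F s v"
  shows "p v f = 0"
  using assms unfolding client_equilibrium_def client_profile_def feasible_dist_def by blast

lemma load_minus_fun_upd_self: "load_minus V w (p(v := d)) v f = load_minus V w p v f"
  unfolding load_minus_def by (rule sum.cong) auto

lemma feasible_dist_point_mass:
  assumes "finite F" "g \<in> nbh_s E F s v"
  shows "feasible_dist E F s v (\<lambda>f. of_bool (f = g))"
proof -
  have "finite (nbh_s E F s v)" using assms(1) unfolding nbh_s_def by simp
  then show ?thesis using assms(2) unfolding feasible_dist_def by auto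
qed

lemma client_cost_point_mass:
  assumes "finite F" "g \<in> nbh_s E F s v"
  shows "client_cost V E w F s (p(v := (\<lambda>f. of_bool (f = g)))) v = of_rat (w v) + load_minus V w p v g"
proof -
  have "finite (nbh_s E F s v)" using assms(1) unfolding nbh_s_def by simp
  then show ?thesis using assms(2) unfolding client_cost_def load_minus_fun_upd_self
    by (simp add: of_bool_def if_distrib[where f = "\<lambda>x. x * _"] cong: if_cong)
qed

text \<open>Deviating to the point mass at g shows that the expected excess residual load
  \<open>\<Sum>f. p v f * (L f - L g)\<close> is at most 0; all its terms are nonnegative, so a client
  never uses a facility that is strictly heavier than g.\<close>

lemma client_equilibrium_unique_lightest:
  assumes ce: "client_equilibrium V E w F s p" and "finite F" and "v \<in> V"
    and g: "g \<in> nbh_s E F s v"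
    and lighter: "\<And>f. f \<in> nbh_s E F s v \<Longrightarrow> f \<noteq> g \<Longrightarrow> load_minus V w p v g < load_minus V w p v f"
    and "f \<in> F"
  shows "p v f = of_bool (f = g)"
proof -
  define N where "N = nbh_s E F s v"
  define L where "L = load_minus V w p v"
  have "finite N" using \<open>finite F\<close> unfolding N_def nbh_s_def by simp
  have "feasible_dist E F s v (p v)"
    using ce \<open>v \<in> V\<close> unfolding client_equilibrium_def client_profile_def by blast
  then have p_sum: "(\<Sum>f\<in>N. p v f) = 1" and p_nonneg: "\<And>f. f \<in> N \<Longrightarrow> p v f \<ge> 0"
    using g unfolding feasible_dist_def N_def nbh_s_def by auto
  have "client_cost V E w F s p v \<le> client_cost V E w F s (p(v := (\<lambda>f. of_bool (f = g)))) v"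
    using ce \<open>v \<in> V\<close> feasible_dist_point_mass[OF \<open>finite F\<close> g]
    unfolding client_equilibrium_def by blast
  then have "(\<Sum>f\<in>N. p v f * L f) \<le> L g"
    using client_cost_point_mass[OF \<open>finite F\<close> g] unfolding client_cost_def N_def L_def by simp
  moreover have "(\<Sum>f\<in>N. p v f * (L f - L g)) = (\<Sum>f\<in>N. p v f * L f) - L g"
    using p_sum by (simp add: right_diff_distrib sum_subtractf flip: sum_distrib_right)
  ultimately have excess_le: "(\<Sum>f\<in>N. p v f * (L f - L g)) \<le> 0" by simp
  have excess_nonneg: "\<And>f. f \<in> N \<Longrightarrow> p v f * (L f - L g) \<ge> 0"
    using p_nonneg lighter unfolding N_def L_def
    by (metis diff_ge_0_iff_ge diff_self less_eq_real_def mult_nonneg_nonneg)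
  have "\<And>f. f \<in> N \<Longrightarrow> p v f * (L f - L g) = 0"
    using sum_nonneg_eq_0_iff[OF \<open>finite N\<close> excess_nonneg] excess_le excess_nonneg
    by (meson antisym sum_nonneg)
  then have heavier_unused: "\<And>f. f \<in> N \<Longrightarrow> f \<noteq> g \<Longrightarrow> p v f = 0"
    using lighter unfolding N_def L_def by fastforce
  have "p v g = 1"
    using p_sum sum.remove[OF \<open>finite N\<close>, of g "p v"] g heavier_unused unfolding N_def by simp
  then show ?thesis
    using heavier_unused client_equilibrium_unreachable[OF ce \<open>v \<in> V\<close> \<open>f \<in> F\<close>]
    unfolding N_def by (cases "f = g") auto
qed

definition V0 :: "nat set" where "V0 = {0, 1, 2, 3}"
definition E0 :: "(nat \<times> nat) set" where "E0 = {(1, 2), (1, 3)}"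
definition w0 :: "nat \<Rightarrow> rat" where
  "w0 v = (if v = 0 then 4 else if v = 1 then 5 else if v = 2 then 1 else 2)"
definition F0 :: "nat set" where "F0 = {0, 1}"
definition U0 :: "nat \<Rightarrow> nat set" where "U0 f = (if f = 0 then {0, 2} else {1, 3})"

lemma fl_instance_V0: "fl_instance V0 E0 w0 F0 U0"
  unfolding fl_instance_def V0_def E0_def w0_def F0_def U0_def by auto

lemma FPPs_fun_upd: "s \<in> FPPs F U \<Longrightarrow> f \<in> F \<Longrightarrow> x \<in> U f \<Longrightarrow> s(f := x) \<in> FPPs F U"
  unfolding FPPs_def by (auto simp: PiE_def Pi_def extensional_def)

lemma FPPs_F0_U0:
  assumes "s \<in> FPPs F0 U0" shows "s 0 \<in> {0, 2}" "s 1 \<in> {1, 3}"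
  using PiE_mem[OF assms[unfolded FPPs_def], of 0] PiE_mem[OF assms[unfolded FPPs_def], of 1]
  by (simp_all add: F0_def U0_def)

lemma nbh_s_E0_F0: "nbh_s E0 F0 s v = {f \<in> F0. s f = v \<or> (v = 1 \<and> s f \<in> {2, 3})}"
  unfolding nbh_s_def nbh_def E0_def by auto

lemma outer_client_assignment:
  assumes ce: "client_equilibrium V0 E0 w0 F0 s p" and s: "s \<in> FPPs F0 U0"
    and v: "v \<in> V0" "v \<noteq> 1" and f: "f \<in> F0"
  shows "p v f = of_bool (s f = v)"
proof (cases "s f = v")
  case True
  have "nbh_s E0 F0 s v = {f}"
    using True FPPs_F0_U0[OF s] f v unfolding nbh_s_E0_F0 by (auto simp: F0_def)
  then have "p v f = of_bool (f = f)"
    by (intro client_equilibrium_unique_lightest[OF ce _ v(1) _ _ f]) (auto simp: F0_def)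
  with True show ?thesis by simp
next
  case False
  with v have "f \<notin> nbh_s E0 F0 s v" unfolding nbh_s_E0_F0 by auto
  with False show ?thesis
    using client_equilibrium_unreachable[OF ce \<open>v \<in> V0\<close> f] by simp
qed

definition middle_choice :: "(nat \<Rightarrow> nat) \<Rightarrow> nat" where
  "middle_choice s = (if s 0 = 2 \<and> s 1 = 3 then 0 else 1)"

lemma middle_client_assignment:
  assumes ce: "client_equilibrium V0 E0 w0 F0 s p" and s: "s \<in> FPPs F0 U0" and f: "f \<in> F0"
  shows "p 1 f = of_bool (f = middle_choice s)"
proof -
  have "V0 - {1} = {0, 2, 3}" by (auto simp: V0_def)
  then have residual: "load_minus V0 w0 p 1 g = 4 * of_bool (s g = 0) + of_bool (s g = 2) + 2 * of_bool (s g = 3)"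
    if "g \<in> F0" for g
    using outer_client_assignment[OF ce s _ _ that] unfolding load_minus_def by (simp add: V0_def w0_def)
  have N: "nbh_s E0 F0 s 1 = (if s 0 = 2 then {0, 1} else {1})"
    using FPPs_F0_U0[OF s] unfolding nbh_s_E0_F0 by (auto simp: F0_def)
  show ?thesis
  proof (rule client_equilibrium_unique_lightest[OF ce _ _ _ _ f])
    show "finite F0" "1 \<in> V0" by (simp_all add: F0_def V0_def)
    show "middle_choice s \<in> nbh_s E0 F0 s 1" unfolding N middle_choice_def by simp
    show "load_minus V0 w0 p 1 (middle_choice s) < load_minus V0 w0 p 1 g"
      if "g \<in> nbh_s E0 F0 s 1" "g \<noteq> middle_choice s" for g
      using that FPPs_F0_U0[OF s] residual[of 0] residual[of 1] unfolding N middle_choice_def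
      by (auto simp: F0_def)
  qed
qed

definition equilibrium_load :: "(nat \<Rightarrow> nat) \<Rightarrow> nat \<Rightarrow> real" where
  "equilibrium_load s f =
     4 * of_bool (s f = 0) + 5 * of_bool (f = middle_choice s) + of_bool (s f = 2) + 2 * of_bool (s f = 3)"

lemma load_client_equilibrium:
  assumes ce: "client_equilibrium V0 E0 w0 F0 s p" and s: "s \<in> FPPs F0 U0" and f: "f \<in> F0"
  shows "load V0 w0 p f = equilibrium_load s f"
  using outer_client_assignment[OF ce s _ _ f] middle_client_assignment[OF ce s f]
  unfolding load_def equilibrium_load_def by (simp add: V0_def w0_def)

lemma better_response_exists:
  assumes "s \<in> FPPs F0 U0"
  shows "\<exists>f\<in>F0. \<exists>x\<in>U0 f. equilibrium_load s f < equilibrium_load (s(f := x)) f"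
  using FPPs_F0_U0[OF assms] by (auto simp: F0_def U0_def equilibrium_load_def middle_choice_def)

lemma no_SPE: "\<not> is_SPE V0 E0 w0 F0 U0 s \<sigma>"
proof
  assume "is_SPE V0 E0 w0 F0 U0 s \<sigma>"
  then have s: "s \<in> FPPs F0 U0"
    and ce: "\<And>t. t \<in> FPPs F0 U0 \<Longrightarrow> client_equilibrium V0 E0 w0 F0 t (\<sigma> t)"
    and stable: "\<forall>f\<in>F0. \<forall>x\<in>U0 f. load V0 w0 (\<sigma> (s(f := x))) f \<le> load V0 w0 (\<sigma> s) f"
    unfolding is_SPE_def full_client_equilibrium_def by auto
  obtain f x where f: "f \<in> F0" "x \<in> U0 f"
    and better: "equilibrium_load s f < equilibrium_load (s(f := x)) f"
    using better_response_exists[OF s] by blast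
  have s': "s(f := x) \<in> FPPs F0 U0" using FPPs_fun_upd[OF s f] .
  show False
    using stable f better load_client_equilibrium[OF ce[OF s] s f(1)]
      load_client_equilibrium[OF ce[OF s'] s' f(1)] by fastforce
qed

theorem mainTheorem2:
  shows "\<exists>V E w F U. fl_instance V E w F U \<and> \<not> (\<exists>s \<sigma>. is_SPE V E w F U s \<sigma>)"
  using fl_instance_V0 no_SPE by blast

end
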